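(* Let $(\boldsymbol X,Y)\sim\mathbb{P}_{\boldsymbol X,Y}$ with $\boldsymbol X\in\mathcal{X}\subset\mathbb{R}^{d_1\times d_2}$, $Y=f(\boldsymbol X)+\varepsilon$ where $f(\boldsymbol X)=\mathbb{E}(Y|\boldsymbol X)$, $f:\mathcal{X}\to[-1,1]$, $\varepsilon$ is a bounded mean-zero noise (possibly depending on $\boldsymbol X$) and $Y\in[-1,1]$. Fix $\pi\in[-1,1]$ and $r\in\mathbb{N}_+$, and suppose $f$ is $(r,\pi)$-sign representable. Then for every function $\bar f:\mathcal{X}\to\mathbb{R}$ with $\mathrm{sgn}\,\bar f=\mathrm{sgn}(f-\pi)$ on $\mathcal{X}$, we have $\mathrm{Risk}_\pi(\bar f)=\inf\{\mathrm{Risk}_\pi(\phi):\phi\in\Phi(r)\}$.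
   Context: Sign convention: $\mathrm{sgn}(x)=1$ if $x>0$ and $-1$ otherwise. $f$ is $(r,\pi)$-sign representable if there exist $\boldsymbol B\in\mathbb{R}^{d_1\times d_2}$ with $\mathrm{rank}(\boldsymbol B)\le r$ and $b\in\mathbb{R}$ such that $\mathrm{sgn}(f(\boldsymbol X)-\pi)=\mathrm{sgn}(\langle\boldsymbol X,\boldsymbol B\rangle+b)$ for all $\boldsymbol X\in\mathcal{X}$, with $\langle\boldsymbol X,\boldsymbol B\rangle=\mathrm{tr}(\boldsymbol X\boldsymbol B^T)$. $\Phi(r)=\{\phi:\boldsymbol X\mapsto\langle\boldsymbol X,\boldsymbol B\rangle+b\mid \mathrm{rank}(\boldsymbol B)\le r,\ (\boldsymbol B,b)\in\mathbb{R}^{d_1\times d_2}\times\mathbb{R}\}$. Weighted classification risk: $\mathrm{Risk}_\pi(\phi)=\frac12\mathbb{E}\big[|Y-\pi|\,|\mathrm{sgn}(Y-\pi)-\mathrm{sgn}\,\phi(\boldsymbol X)|\big]$, expectation over $(\boldsymbol X,Y)\sim\mathbb{P}_{\boldsymbol X,Y}$. *)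

theory Defs
  imports "HOL-Analysis.Analysis" "HOL-Probability.Probability"
begin

definition sgnp :: "real \<Rightarrow> real" where
  "sgnp x = (if x > 0 then 1 else -1)"

text \<open>Trace inner product of d1 x d2 matrices: tr(X B^T) = sum_ij X_ij B_ij.\<close>
definition mat_inner :: "real^'d2^'d1 \<Rightarrow> real^'d2^'d1 \<Rightarrow> real" where
  "mat_inner X B = (\<Sum>i\<in>UNIV. \<Sum>j\<in>UNIV. X $ i $ j * B $ i $ j)"

definition sign_representable ::
  "(real^'d2^'d1) set \<Rightarrow> (real^'d2^'d1 \<Rightarrow> real) \<Rightarrow> nat \<Rightarrow> real \<Rightarrow> bool" where
  "sign_representable S f r p \<longleftrightarrow>
     (\<exists>B b. rank B \<le> r \<and> (\<forall>X\<in>S. sgnp (f X - p) = sgnp (mat_inner X B + b)))"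

definition Phi :: "nat \<Rightarrow> (real^'d2^'d1 \<Rightarrow> real) set" where
  "Phi r = {\<phi>. \<exists>B b. rank B \<le> r \<and> \<phi> = (\<lambda>X. mat_inner X B + b)}"

definition risk ::
  "'a measure \<Rightarrow> ('a \<Rightarrow> real^'d2^'d1) \<Rightarrow> ('a \<Rightarrow> real) \<Rightarrow> real \<Rightarrow> (real^'d2^'d1 \<Rightarrow> real) \<Rightarrow> real" where
  "risk M X Y p \<phi> = (1/2) * (\<integral>\<omega>. \<bar>Y \<omega> - p\<bar> * \<bar>sgnp (Y \<omega> - p) - sgnp (\<phi> (X \<omega>))\<bar> \<partial>M)"

end

theory Submission
  imports Defs
begin

text \<open>Write s = sgn \<phi>(X) and g = f - \<pi>. Pointwise the weighted loss equals
  |Y - \<pi>| - s (Y - \<pi>), and since s is a function of X and f(X) = E(Y | X), the tower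
  property replaces Y by f(X) in the second term. Hence
  Risk(\<phi>) = (E|Y - \<pi>| - E[s g(X)]) / 2 \<ge> (E|Y - \<pi>| - E|g(X)|) / 2,
  with equality when s agrees with sgn g on the range of X. The risk only depends on
  the sign of \<phi> on \<X>, so every function with the sign of f - \<pi> attains the lower bound, and
  by sign representability so does a member of \<Phi>(r).\<close>

lemma borel_measurable_sgnp [measurable]: "sgnp \<in> borel_measurable borel"
  unfolding sgnp_def[abs_def] by measurable

lemma abs_sgnp [simp]: "\<bar>sgnp t\<bar> = 1"
  by (simp add: sgnp_def)

lemma sgnp_mult_self: "sgnp t * t = \<bar>t\<bar>"
  by (simp add: sgnp_def)

lemma sgnp_mult_le_abs: "sgnp s * t \<le> \<bar>t\<bar>"
  by (simp add: sgnp_def abs_if)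

lemma abs_mult_abs_sgnp_diff: "\<bar>y\<bar> * \<bar>sgnp y - sgnp t\<bar> = \<bar>y\<bar> - sgnp t * y"
  by (auto simp: sgnp_def)

lemma sgnp_eq_indicator: "sgnp t = 2 * indicator {0<..} t - 1"
  by (simp add: sgnp_def indicator_def)

lemma borel_measurable_mat_inner_affine:
  "(\<lambda>X. mat_inner X B + b) \<in> borel_measurable borel"
proof (rule borel_measurable_continuous_onI)
  show "continuous_on UNIV (\<lambda>X. mat_inner X B + b)"
    unfolding mat_inner_def by (intro continuous_intros)
qed

lemma Phi_borel_measurable: "\<phi> \<in> Phi r \<Longrightarrow> \<phi> \<in> borel_measurable borel"
  unfolding Phi_def using borel_measurable_mat_inner_affine by blast

lemma risk_cong_sgnp:
  assumes "\<forall>\<omega>\<in>space M. X \<omega> \<in> S" and "\<forall>x\<in>S. sgnp (g x) = sgnp (h x)"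
  shows "risk M X Y p g = risk M X Y p h"
  unfolding risk_def using assms by (simp cong: Bochner_Integration.integral_cong)

lemma integrable_mult_abs_le_one:
  fixes Z g :: "'a \<Rightarrow> real"
  assumes "integrable M Z" and [measurable]: "g \<in> borel_measurable M"
    and "\<And>\<omega>. \<bar>g \<omega>\<bar> \<le> 1"
  shows "integrable M (\<lambda>\<omega>. g \<omega> * Z \<omega>)"
proof (rule Bochner_Integration.integrable_bound)
  show "integrable M Z" by fact
  have [measurable]: "Z \<in> borel_measurable M"
    using assms(1) by blast
  show "(\<lambda>\<omega>. g \<omega> * Z \<omega>) \<in> borel_measurable M"
    by measurable
  show "AE \<omega> in M. norm (g \<omega> * Z \<omega>) \<le> norm (Z \<omega>)"
    using assms(3) by (intro AE_I2) (simp add: abs_mult mult_left_le_one_le)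
qed

locale regression_model = prob_space M for M :: "'a measure" +
  fixes X :: "'a \<Rightarrow> real^'d2^'d1" and Y :: "'a \<Rightarrow> real" and f :: "real^'d2^'d1 \<Rightarrow> real"
  assumes X_measurable [measurable]: "X \<in> borel_measurable M"
    and f_measurable [measurable]: "f \<in> borel_measurable borel"
    and Y_integrable: "integrable M Y"
    and fX_integrable: "integrable M (\<lambda>\<omega>. f (X \<omega>))"
    and cond_exp: "\<forall>A\<in>sets borel. (\<integral>\<omega>. Y \<omega> * indicator A (X \<omega>) \<partial>M)
                                  = (\<integral>\<omega>. f (X \<omega>) * indicator A (X \<omega>) \<partial>M)"
begin

lemma integral_sgnp_mult_cond_exp:
  assumes [measurable]: "\<phi> \<in> borel_measurable borel"
  shows "(\<integral>\<omega>. sgnp (\<phi> (X \<omega>)) * Y \<omega> \<partial>M) = (\<integral>\<omega>. sgnp (\<phi> (X \<omega>)) * f (X \<omega>) \<partial>M)"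
proof -
  define A where "A = {x. 0 < \<phi> x}"
  have [measurable]: "A \<in> sets borel"
    unfolding A_def by measurable
  have indicator_integrable: "integrable M (\<lambda>\<omega>. Z \<omega> * indicator A (X \<omega>))"
    if "integrable M Z" for Z :: "'a \<Rightarrow> real"
    using integrable_mult_abs_le_one[OF that, of "\<lambda>\<omega>. indicator A (X \<omega>)"]
    by (simp add: mult.commute)
  have sgnp_mult: "sgnp (\<phi> (X \<omega>)) * z = 2 * (z * indicator A (X \<omega>)) - z" for z \<omega>
    by (simp add: sgnp_eq_indicator A_def indicator_def)
  have "(\<integral>\<omega>. Y \<omega> \<partial>M) = (\<integral>\<omega>. f (X \<omega>) \<partial>M)"
    using cond_exp[rule_format, of UNIV] by simp
  moreover have "(\<integral>\<omega>. Y \<omega> * indicator A (X \<omega>) \<partial>M) = (\<integral>\<omega>. f (X \<omega>) * indicator A (X \<omega>) \<partial>M)"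
    using cond_exp by simp
  ultimately show ?thesis
    unfolding sgnp_mult
    using indicator_integrable[OF Y_integrable] indicator_integrable[OF fX_integrable]
      Y_integrable fX_integrable
    by simp
qed

lemma risk_eq_cond_exp:
  assumes [measurable]: "\<phi> \<in> borel_measurable borel"
  shows "risk M X Y p \<phi> = (1/2) * ((\<integral>\<omega>. \<bar>Y \<omega> - p\<bar> \<partial>M)
           - (\<integral>\<omega>. sgnp (\<phi> (X \<omega>)) * (f (X \<omega>) - p) \<partial>M))"
proof -
  have sgnp_integrable: "integrable M (\<lambda>\<omega>. sgnp (\<phi> (X \<omega>)) * Z \<omega>)"
    if "integrable M Z" for Z
    using that by (rule integrable_mult_abs_le_one) simp_all
  have "(\<integral>\<omega>. sgnp (\<phi> (X \<omega>)) * (Y \<omega> - p) \<partial>M)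
        = (\<integral>\<omega>. sgnp (\<phi> (X \<omega>)) * (f (X \<omega>) - p) \<partial>M)"
    using integral_sgnp_mult_cond_exp[OF assms]
      sgnp_integrable[OF Y_integrable] sgnp_integrable[OF fX_integrable]
      sgnp_integrable[OF integrable_const[of p]]
    by (simp add: right_diff_distrib)
  moreover have "risk M X Y p \<phi>
      = (1/2) * (\<integral>\<omega>. \<bar>Y \<omega> - p\<bar> - sgnp (\<phi> (X \<omega>)) * (Y \<omega> - p) \<partial>M)"
    unfolding risk_def abs_mult_abs_sgnp_diff ..
  ultimately show ?thesis
    using Y_integrable by (simp add: sgnp_integrable[of "\<lambda>\<omega>. Y \<omega> - p"])
qed

lemma risk_shifted_regression_le:
  assumes [measurable]: "\<phi> \<in> borel_measurable borel"
  shows "risk M X Y p (\<lambda>x. f x - p) \<le> risk M X Y p \<phi>"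
proof -
  have "(\<integral>\<omega>. sgnp (\<phi> (X \<omega>)) * (f (X \<omega>) - p) \<partial>M) \<le> (\<integral>\<omega>. \<bar>f (X \<omega>) - p\<bar> \<partial>M)"
    using fX_integrable
    by (intro integral_mono integrable_mult_abs_le_one) (auto simp: sgnp_mult_le_abs)
  then show ?thesis
    using assms by (simp add: risk_eq_cond_exp sgnp_mult_self)
qed

end

theorem theorem1:
  fixes M :: "'a measure"
    and X :: "'a \<Rightarrow> real^'d2^'d1"
    and Y :: "'a \<Rightarrow> real"
    and S :: "(real^'d2^'d1) set"
    and f :: "real^'d2^'d1 \<Rightarrow> real"
    and p :: real
    and r :: nat
  assumes "prob_space M"
    and "X \<in> borel_measurable M"
    and "Y \<in> borel_measurable M"
    and "\<forall>\<omega>\<in>space M. X \<omega> \<in> S"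
    and "\<forall>\<omega>\<in>space M. Y \<omega> \<in> {-1..1}"
    and "f ` S \<subseteq> {-1..1}"
    and "f \<in> borel_measurable borel"
    and "\<forall>A\<in>sets borel. (\<integral>\<omega>. Y \<omega> * indicator A (X \<omega>) \<partial>M)
                         = (\<integral>\<omega>. f (X \<omega>) * indicator A (X \<omega>) \<partial>M)"
    and "p \<in> {-1..1}"
    and "r \<ge> 1"
    and "sign_representable S f r p"
  shows "\<forall>fbar :: real^'d2^'d1 \<Rightarrow> real.
           (\<forall>x\<in>S. sgnp (fbar x) = sgnp (f x - p)) \<longrightarrow>
           risk M X Y p fbar = (INF \<phi>\<in>Phi r. risk M X Y p \<phi>)"
proof (intro allI impI)
  fix fbar :: "real^'d2^'d1 \<Rightarrow> real"
  assume fbar_sgnp: "\<forall>x\<in>S. sgnp (fbar x) = sgnp (f x - p)"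
  interpret prob_space M by fact
  have "integrable M Y"
    using assms(3,5) by (intro integrable_const_bound[where B=1] AE_I2) auto
  moreover have "integrable M (\<lambda>\<omega>. f (X \<omega>))"
    using assms(2,4,6,7) by (intro integrable_const_bound[where B=1] AE_I2) 
      (auto simp: image_subset_iff abs_le_iff)
  ultimately interpret regression_model M X Y f
    using assms(2,7,8) by unfold_locales
  obtain B b where "rank B \<le> r"
    and B_sgnp: "\<forall>x\<in>S. sgnp (f x - p) = sgnp (mat_inner x B + b)"
    using assms(11) unfolding sign_representable_def by blast
  then have "(\<lambda>x. mat_inner x B + b) \<in> Phi r"
    unfolding Phi_def by blast
  moreover have "risk M X Y p (\<lambda>x. mat_inner x B + b) = risk M X Y p (\<lambda>x. f x - p)"
    using assms(4) B_sgnp by (intro risk_cong_sgnp) auto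
  ultimately have "(INF \<phi>\<in>Phi r. risk M X Y p \<phi>) = risk M X Y p (\<lambda>x. f x - p)"
    by (intro cInf_eq_minimum rev_image_eqI[of "\<lambda>x. mat_inner x B + b"])
      (auto intro: risk_shifted_regression_le Phi_borel_measurable)
  moreover have "risk M X Y p fbar = risk M X Y p (\<lambda>x. f x - p)"
    using assms(4) fbar_sgnp by (intro risk_cong_sgnp) auto
  ultimately show "risk M X Y p fbar = (INF \<phi>\<in>Phi r. risk M X Y p \<phi>)"
    by simp
qed

end
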